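(* Let $(\Omega,\mathcal{F},\mathbb{P})$ be a probability space, $L$ a Riesz space with $L^\infty\subset L\subset L^1$, and $\rho: L \to (-\infty,\infty]$ monotone, cash-invariant and positively homogeneous. Assume $\rho$ is not as conservative as the worst-case risk measure, i.e. there exists $X \in L$ with $\rho(X) < \mathrm{WC}(X) := \operatorname{ess\,sup}(-X)$. Then there exists a market $(S^0,S)$ on $(\Omega,\mathcal{F},\mathbb{P})$, satisfying the standing assumptions in the context and with returns in $L$, that does not admit arbitrage of the first kind but admits strong $\rho$-arbitrage.
   Context: A market: riskless asset with $S^0_0=1$, $S^0_1=1+r$, $r>-1$, and risky assets $S^1,\dots,S^d$ with constants $S^i_0>0$ and real-valued $\mathcal{F}$-measurable $S^i_1$; returns $R^i:=(S^i_1-S^i_0)/S^i_0$. Standing assumptions: nonredundancy (if $\theta\in\mathbb{R}^{1+d}$ with $\sum_{i=0}^d\theta^iS^i_t=0$ a.s. for $t\in\{0,1\}$ then $\theta=0$), $R^i\in L^1$, and $\mathbb{E}[R^i]\ne r$ for some $i$. Portfolio $\pi\in\mathbb{R}^d$ has excess return $X_\pi:=\pi\cdot(R-r\mathbf{1})$. Monotone: $X_1\le X_2$ a.s. implies $\rho(X_1)\ge\rho(X_2)$; cash-invariant: $\rho(X+c)=\rho(X)-c$; positively homogeneous: $\rho(\lambda X)=\lambda\rho(X)$ for $\lambda\ge 0$. Arbitrage of the first kind: a strategy $(\theta^0,\theta)\in\mathbb{R}^{1+d}$ with $\theta^0S^0_0+\theta\cdot S_0\le0$, $\theta^0S^0_1+\theta\cdot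 S_1\ge0$ a.s., and $\mathbb{P}[\theta^0S^0_1+\theta\cdot S_1>0]>0$. Strong $\rho$-arbitrage: for every $\pi\in\mathbb{R}^d$ there is $\pi'\in\mathbb{R}^d$ with $\mathbb{E}[X_{\pi'}]>\mathbb{E}[X_\pi]$ and $\rho(X_{\pi'})<\rho(X_\pi)$. *)

theory Defs
  imports "HOL-Probability.Probability"
begin

definition Linf :: "'a measure \<Rightarrow> ('a \<Rightarrow> real) set" where
  "Linf M = {X. X \<in> borel_measurable M \<and> (\<exists>C. AE \<omega> in M. \<bar>X \<omega>\<bar> \<le> C)}"

definition L1 :: "'a measure \<Rightarrow> ('a \<Rightarrow> real) set" where
  "L1 M = {X. integrable M X}"

definition riesz_space :: "('a \<Rightarrow> real) set \<Rightarrow> bool" where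
  "riesz_space L \<longleftrightarrow>
     (\<lambda>\<omega>. 0) \<in> L \<and>
     (\<forall>X\<in>L. \<forall>Y\<in>L. (\<lambda>\<omega>. X \<omega> + Y \<omega>) \<in> L) \<and>
     (\<forall>X\<in>L. \<forall>c::real. (\<lambda>\<omega>. c * X \<omega>) \<in> L) \<and>
     (\<forall>X\<in>L. \<forall>Y\<in>L. (\<lambda>\<omega>. max (X \<omega>) (Y \<omega>)) \<in> L)"

definition monotone_rm :: "'a measure \<Rightarrow> ('a \<Rightarrow> real) set \<Rightarrow> (('a \<Rightarrow> real) \<Rightarrow> ereal) \<Rightarrow> bool" where
  "monotone_rm M L \<rho> \<longleftrightarrow>
     (\<forall>X\<in>L. \<forall>Y\<in>L. (AE \<omega> in M. X \<omega> \<le> Y \<omega>) \<longrightarrow> \<rho> X \<ge> \<rho> Y)"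

definition cash_invariant :: "('a \<Rightarrow> real) set \<Rightarrow> (('a \<Rightarrow> real) \<Rightarrow> ereal) \<Rightarrow> bool" where
  "cash_invariant L \<rho> \<longleftrightarrow>
     (\<forall>X\<in>L. \<forall>c::real. \<rho> (\<lambda>\<omega>. X \<omega> + c) = \<rho> X - ereal c)"

definition pos_homogeneous :: "('a \<Rightarrow> real) set \<Rightarrow> (('a \<Rightarrow> real) \<Rightarrow> ereal) \<Rightarrow> bool" where
  "pos_homogeneous L \<rho> \<longleftrightarrow>
     (\<forall>X\<in>L. \<forall>t::real. t \<ge> 0 \<longrightarrow> \<rho> (\<lambda>\<omega>. t * X \<omega>) = ereal t * \<rho> X)"

definition WC :: "'a measure \<Rightarrow> ('a \<Rightarrow> real) \<Rightarrow> ereal" where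
  "WC M X = esssup M (\<lambda>\<omega>. ereal (- X \<omega>))"

(* Market: riskless asset S^0_0 = 1, S^0_1 = 1 + r; risky assets indexed by i \<in> {1..d}
   with initial prices S0 i and terminal prices S1 i. *)
definition ret :: "(nat \<Rightarrow> real) \<Rightarrow> (nat \<Rightarrow> 'a \<Rightarrow> real) \<Rightarrow> nat \<Rightarrow> 'a \<Rightarrow> real" where
  "ret S0 S1 i \<omega> = (S1 i \<omega> - S0 i) / S0 i"

definition excess_return :: "nat \<Rightarrow> real \<Rightarrow> (nat \<Rightarrow> real) \<Rightarrow> (nat \<Rightarrow> 'a \<Rightarrow> real)
    \<Rightarrow> (nat \<Rightarrow> real) \<Rightarrow> 'a \<Rightarrow> real" where
  "excess_return d r S0 S1 \<pi> \<omega> = (\<Sum>i=1..d. \<pi> i * (ret S0 S1 i \<omega> - r))"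

definition nonredundant :: "'a measure \<Rightarrow> nat \<Rightarrow> real \<Rightarrow> (nat \<Rightarrow> real) \<Rightarrow> (nat \<Rightarrow> 'a \<Rightarrow> real) \<Rightarrow> bool" where
  "nonredundant M d r S0 S1 \<longleftrightarrow>
     (\<forall>\<theta>0::real. \<forall>\<theta>::nat \<Rightarrow> real.
        \<theta>0 * 1 + (\<Sum>i=1..d. \<theta> i * S0 i) = 0 \<and>
        (AE \<omega> in M. \<theta>0 * (1 + r) + (\<Sum>i=1..d. \<theta> i * S1 i \<omega>) = 0)
        \<longrightarrow> \<theta>0 = 0 \<and> (\<forall>i\<in>{1..d}. \<theta> i = 0))"

(* standing assumptions on the market *)
definition market :: "'a measure \<Rightarrow> nat \<Rightarrow> real \<Rightarrow> (nat \<Rightarrow> real) \<Rightarrow> (nat \<Rightarrow> 'a \<Rightarrow> real) \<Rightarrow> bool" where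
  "market M d r S0 S1 \<longleftrightarrow>
     r > -1 \<and>
     (\<forall>i\<in>{1..d}. S0 i > 0 \<and> S1 i \<in> borel_measurable M) \<and>
     nonredundant M d r S0 S1 \<and>
     (\<forall>i\<in>{1..d}. integrable M (ret S0 S1 i)) \<and>
     (\<exists>i\<in>{1..d}. (\<integral>\<omega>. ret S0 S1 i \<omega> \<partial>M) \<noteq> r)"

definition arbitrage_first_kind :: "'a measure \<Rightarrow> nat \<Rightarrow> real \<Rightarrow> (nat \<Rightarrow> real) \<Rightarrow> (nat \<Rightarrow> 'a \<Rightarrow> real) \<Rightarrow> bool" where
  "arbitrage_first_kind M d r S0 S1 \<longleftrightarrow>
     (\<exists>\<theta>0::real. \<exists>\<theta>::nat \<Rightarrow> real.
        \<theta>0 * 1 + (\<Sum>i=1..d. \<theta> i * S0 i) \<le> 0 \<and>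
        (AE \<omega> in M. \<theta>0 * (1 + r) + (\<Sum>i=1..d. \<theta> i * S1 i \<omega>) \<ge> 0) \<and>
        measure M {\<omega>\<in>space M. \<theta>0 * (1 + r) + (\<Sum>i=1..d. \<theta> i * S1 i \<omega>) > 0} > 0)"

(* portfolios \<pi> \<in> \<real>^d are functions nat \<Rightarrow> real; only the values on {1..d} matter *)
definition strong_rho_arbitrage :: "'a measure \<Rightarrow> (('a \<Rightarrow> real) \<Rightarrow> ereal) \<Rightarrow> nat \<Rightarrow> real
    \<Rightarrow> (nat \<Rightarrow> real) \<Rightarrow> (nat \<Rightarrow> 'a \<Rightarrow> real) \<Rightarrow> bool" where
  "strong_rho_arbitrage M \<rho> d r S0 S1 \<longleftrightarrow>
     (\<forall>\<pi>::nat \<Rightarrow> real. \<exists>\<pi>'::nat \<Rightarrow> real.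
        (\<integral>\<omega>. excess_return d r S0 S1 \<pi>' \<omega> \<partial>M) > (\<integral>\<omega>. excess_return d r S0 S1 \<pi> \<omega> \<partial>M) \<and>
        \<rho> (excess_return d r S0 S1 \<pi>') < \<rho> (excess_return d r S0 S1 \<pi>))"

end

theory Submission
  imports Defs
begin

text \<open>
  Shifting X by a constant m with \<rho>(X) < m < WC(X) gives a position Y with \<rho>(Y) < 0 that still
  loses money with positive probability; by monotonicity it also gains with positive probability.
  Mixing Y with its positive part, Z = \<epsilon> Y + (1 - \<epsilon>) max(Y, 0), keeps \<rho>(Z) \<le> \<rho>(Y) < 0 (as Z \<ge> Y) and the
  losses of Y, while E[Z] > 0 for small \<epsilon>. The one-asset market with r = 0 and return Z has no
  arbitrage of the first kind because Z takes both signs, yet holding t units of the asset for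
  large t beats any portfolio: the mean return t E[Z] grows and \<rho>(t Z) = t \<rho>(Z) tends to -\<infinity>.
\<close>

lemma riesz_space_zero: "riesz_space L \<Longrightarrow> (\<lambda>\<omega>. 0) \<in> L"
  unfolding riesz_space_def by blast

lemma riesz_space_add: "riesz_space L \<Longrightarrow> X \<in> L \<Longrightarrow> Y \<in> L \<Longrightarrow> (\<lambda>\<omega>. X \<omega> + Y \<omega>) \<in> L"
  unfolding riesz_space_def by blast

lemma riesz_space_scale: "riesz_space L \<Longrightarrow> X \<in> L \<Longrightarrow> (\<lambda>\<omega>. c * X \<omega>) \<in> L"
  unfolding riesz_space_def by blast

lemma riesz_space_max: "riesz_space L \<Longrightarrow> X \<in> L \<Longrightarrow> Y \<in> L \<Longrightarrow> (\<lambda>\<omega>. max (X \<omega>) (Y \<omega>)) \<in> L"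
  unfolding riesz_space_def by blast

lemma monotone_rmD:
  "monotone_rm M L \<rho> \<Longrightarrow> X \<in> L \<Longrightarrow> Y \<in> L \<Longrightarrow> AE \<omega> in M. X \<omega> \<le> Y \<omega> \<Longrightarrow> \<rho> Y \<le> \<rho> X"
  unfolding monotone_rm_def by blast

lemma cash_invariantD: "cash_invariant L \<rho> \<Longrightarrow> X \<in> L \<Longrightarrow> \<rho> (\<lambda>\<omega>. X \<omega> + c) = \<rho> X - ereal c"
  unfolding cash_invariant_def by blast

lemma pos_homogeneousD:
  "pos_homogeneous L \<rho> \<Longrightarrow> X \<in> L \<Longrightarrow> t \<ge> 0 \<Longrightarrow> \<rho> (\<lambda>\<omega>. t * X \<omega>) = ereal t * \<rho> X"
  unfolding pos_homogeneous_def by blast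

lemma WC_le:
  assumes "X \<in> borel_measurable M" and "AE \<omega> in M. - X \<omega> \<le> c"
  shows "WC M X \<le> ereal c"
  unfolding WC_def using assms by (intro esssup_I) auto

lemma pos_homogeneous_zero:
  assumes "pos_homogeneous L \<rho>" and "(\<lambda>\<omega>. 0) \<in> L"
  shows "\<rho> (\<lambda>\<omega>. 0) = 0"
  using pos_homogeneousD[OF assms, of 0] by (simp flip: zero_ereal_def)

lemma not_AE_nonpos_if_integral_pos:
  fixes Z :: "'a \<Rightarrow> real"
  assumes "integrable M Z" and "(\<integral>\<omega>. Z \<omega> \<partial>M) > 0"
  shows "\<not> (AE \<omega> in M. Z \<omega> \<le> 0)"
  using integral_mono_AE[of M Z "\<lambda>_. 0"] assms by auto

lemma exists_mix_pos_part_positive_mean: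
  fixes Y :: "'a \<Rightarrow> real"
  assumes Y: "integrable M Y" and gains: "\<not> (AE \<omega> in M. Y \<omega> \<le> 0)"
  obtains \<epsilon> where "0 < \<epsilon>" "\<epsilon> \<le> 1" "(\<integral>\<omega>. \<epsilon> * Y \<omega> + (1 - \<epsilon>) * max (Y \<omega>) 0 \<partial>M) > 0"
proof -
  define a where "a = (\<integral>\<omega>. max (Y \<omega>) 0 \<partial>M)"
  define b where "b = (\<integral>\<omega>. Y \<omega> \<partial>M)"
  have Y_pos: "integrable M (\<lambda>\<omega>. max (Y \<omega>) 0)"
    using Y by auto
  have "a \<noteq> 0"
  proof
    assume "a = 0"
    then have "AE \<omega> in M. max (Y \<omega>) 0 = 0"
      using integral_nonneg_eq_0_iff_AE[OF Y_pos] by (simp add: a_def)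
    then have "AE \<omega> in M. Y \<omega> \<le> 0"
      by (rule eventually_mono) (simp add: max_def split: if_splits)
    with gains show False ..
  qed
  moreover have "a \<ge> 0"
    unfolding a_def by (rule integral_nonneg_AE) auto
  ultimately have a: "a > 0" by simp
  have "b \<le> a"
    unfolding a_def b_def using Y Y_pos by (intro integral_mono) auto
  then have denom: "2 * a - b > 0"
    using a by linarith
  define \<epsilon> where "\<epsilon> = a / (2 * a - b)"
  have mean: "(\<integral>\<omega>. \<epsilon> * Y \<omega> + (1 - \<epsilon>) * max (Y \<omega>) 0 \<partial>M) = \<epsilon> * b + (1 - \<epsilon>) * a"
    using Y Y_pos by (simp add: a_def b_def)
  also have "\<dots> = a - \<epsilon> * (a - b)"
    by (simp add: algebra_simps)
  also have "\<dots> = a * a / (2 * a - b)"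
    using denom by (simp add: \<epsilon>_def field_simps)
  finally show thesis
    using a denom \<open>b \<le> a\<close> by (intro that[of \<epsilon>]) (auto simp: \<epsilon>_def)
qed

lemma exists_negative_risk_with_losses:
  assumes L: "riesz_space L" "Linf M \<subseteq> L" and cash: "cash_invariant L \<rho>"
    and X: "X \<in> L" "X \<in> borel_measurable M" and below: "\<rho> X < WC M X"
  obtains Y where "Y \<in> L" "\<rho> Y < 0" "\<not> (AE \<omega> in M. Y \<omega> \<ge> 0)"
proof -
  obtain m where m: "\<rho> X < ereal m" "ereal m < WC M X"
    using ereal_dense2[OF below] by blast
  have "(\<lambda>\<omega>. m) \<in> L"
    using L(2) unfolding Linf_def by (auto intro!: exI[of _ "\<bar>m\<bar>"])
  with L(1) X(1) have "(\<lambda>\<omega>. X \<omega> + m) \<in> L"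
    by (rule riesz_space_add)
  moreover have "\<rho> (\<lambda>\<omega>. X \<omega> + m) < 0"
    using cash_invariantD[OF cash X(1)] m(1) by (cases "\<rho> X") auto
  moreover have "\<not> (AE \<omega> in M. X \<omega> + m \<ge> 0)"
  proof
    assume "AE \<omega> in M. X \<omega> + m \<ge> 0"
    then have "WC M X \<le> ereal m"
      by (intro WC_le X(2)) (auto elim: eventually_mono)
    with m(2) show False by simp
  qed
  ultimately show thesis by (rule that)
qed

lemma not_AE_nonpos_if_negative_risk:
  assumes L: "riesz_space L" and mono: "monotone_rm M L \<rho>" and hom: "pos_homogeneous L \<rho>"
    and Y: "Y \<in> L" "\<rho> Y < 0"
  shows "\<not> (AE \<omega> in M. Y \<omega> \<le> 0)"
proof
  have zero: "(\<lambda>\<omega>. 0) \<in> L"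
    using L by (rule riesz_space_zero)
  assume "AE \<omega> in M. Y \<omega> \<le> 0"
  then have "\<rho> (\<lambda>\<omega>. 0) \<le> \<rho> Y"
    by (rule monotone_rmD[OF mono Y(1) zero])
  with Y(2) show False
    using pos_homogeneous_zero[OF hom zero] by simp
qed

lemma exists_two_signed_negative_risk_positive_mean:
  assumes L: "riesz_space L" "L \<subseteq> L1 M" and mono: "monotone_rm M L \<rho>"
    and Y: "Y \<in> L" "\<rho> Y < 0" "\<not> (AE \<omega> in M. Y \<omega> \<le> 0)" "\<not> (AE \<omega> in M. Y \<omega> \<ge> 0)"
  obtains Z where "Z \<in> L" "\<rho> Z < 0" "(\<integral>\<omega>. Z \<omega> \<partial>M) > 0" "\<not> (AE \<omega> in M. Z \<omega> \<ge> 0)"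
proof -
  have "integrable M Y"
    using L(2) Y(1) unfolding L1_def by blast
  then obtain \<epsilon> where \<epsilon>: "0 < \<epsilon>" "\<epsilon> \<le> 1"
    and mean: "(\<integral>\<omega>. \<epsilon> * Y \<omega> + (1 - \<epsilon>) * max (Y \<omega>) 0 \<partial>M) > 0"
    using Y(3) by (rule exists_mix_pos_part_positive_mean)
  define Z where "Z = (\<lambda>\<omega>. \<epsilon> * Y \<omega> + (1 - \<epsilon>) * max (Y \<omega>) 0)"
  have "Z \<in> L"
    unfolding Z_def using L(1) Y(1)
    by (intro riesz_space_add riesz_space_scale riesz_space_max riesz_space_zero)
  have "Y \<omega> \<le> Z \<omega>" for \<omega>
    using mult_left_mono[of "Y \<omega>" "max (Y \<omega>) 0" "1 - \<epsilon>"] \<epsilon>(2)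
    by (simp add: Z_def algebra_simps)
  then have "\<rho> Z \<le> \<rho> Y"
    by (intro monotone_rmD[OF mono Y(1) \<open>Z \<in> L\<close>]) simp
  moreover have "\<not> (AE \<omega> in M. Z \<omega> \<ge> 0)"
  proof
    assume "AE \<omega> in M. Z \<omega> \<ge> 0"
    then have "AE \<omega> in M. Y \<omega> \<ge> 0"
      by (rule eventually_mono) (use \<epsilon>(1) in \<open>auto simp: Z_def max_def zero_le_mult_iff split: if_splits\<close>)
    with Y(4) show False ..
  qed
  ultimately show thesis
    using Y(2) mean \<open>Z \<in> L\<close> by (intro that[of Z]) (auto simp: Z_def)
qed

lemma ret_single_asset: "ret (\<lambda>_. 1) (\<lambda>_ \<omega>. 1 + Z \<omega>) i = Z"
  by (rule ext) (simp add: ret_def)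

lemma excess_return_single_asset:
  "excess_return 1 0 (\<lambda>_. 1) (\<lambda>_ \<omega>. 1 + Z \<omega>) \<pi> = (\<lambda>\<omega>. \<pi> 1 * Z \<omega>)"
  by (rule ext) (simp add: excess_return_def ret_single_asset)

lemma market_single_asset:
  assumes Z: "integrable M Z" and mean: "(\<integral>\<omega>. Z \<omega> \<partial>M) \<noteq> 0"
  shows "market M 1 0 (\<lambda>_. 1) (\<lambda>_ \<omega>. 1 + Z \<omega>)"
  unfolding market_def
proof (intro conjI)
  show "nonredundant M 1 0 (\<lambda>_. 1) (\<lambda>_ \<omega>. 1 + Z \<omega>)"
    unfolding nonredundant_def
  proof (intro allI impI)
    fix \<theta>0 :: real and \<theta> :: "nat \<Rightarrow> real"
    assume "\<theta>0 * 1 + (\<Sum>i = 1..1. \<theta> i * 1) = 0 \<and>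
      (AE \<omega> in M. \<theta>0 * (1 + 0) + (\<Sum>i = 1..1. \<theta> i * (1 + Z \<omega>)) = 0)"
    then have \<theta>0: "\<theta>0 = - \<theta> 1" and "AE \<omega> in M. \<theta>0 + \<theta> 1 * (1 + Z \<omega>) = 0"
      by simp_all
    then have "AE \<omega> in M. \<theta> 1 * Z \<omega> = 0"
      by (auto elim!: eventually_mono simp: algebra_simps)
    then have "\<theta> 1 * (\<integral>\<omega>. Z \<omega> \<partial>M) = 0"
      by (metis integral_eq_zero_AE integral_mult_right_zero)
    then show "\<theta>0 = 0 \<and> (\<forall>i\<in>{1..1}. \<theta> i = 0)"
      using \<theta>0 mean by simp
  qed
qed (use assms in \<open>auto simp: ret_single_asset\<close>)

lemma no_arbitrage_first_kind_single_asset: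
  assumes "\<not> (AE \<omega> in M. Z \<omega> \<ge> 0)" and "\<not> (AE \<omega> in M. Z \<omega> \<le> 0)"
  shows "\<not> arbitrage_first_kind M 1 0 (\<lambda>_. 1) (\<lambda>_ \<omega>. 1 + Z \<omega>)"
  unfolding arbitrage_first_kind_def
proof clarsimp
  fix \<theta>0 :: real and \<theta> :: "nat \<Rightarrow> real"
  assume cost: "\<theta>0 + \<theta> 1 \<le> 0" and payoff: "AE \<omega> in M. 0 \<le> \<theta>0 + \<theta> 1 * (1 + Z \<omega>)"
    and gain: "0 < measure M {\<omega> \<in> space M. 0 < \<theta>0 + \<theta> 1 * (1 + Z \<omega>)}"
  have "AE \<omega> in M. 0 \<le> \<theta> 1 * Z \<omega>"
    using payoff by (rule eventually_mono) (use cost in \<open>simp add: algebra_simps\<close>)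
  then have "\<theta> 1 > 0 \<Longrightarrow> AE \<omega> in M. Z \<omega> \<ge> 0" and "\<theta> 1 < 0 \<Longrightarrow> AE \<omega> in M. Z \<omega> \<le> 0"
    by (auto elim!: eventually_mono simp: zero_le_mult_iff)
  then have "\<theta> 1 = 0"
    using assms by (metis linorder_neqE_linordered_idom)
  then show False
    using gain cost by simp
qed

lemma strong_rho_arbitrage_single_asset:
  assumes L: "riesz_space L" and Z: "Z \<in> L" and finite: "\<forall>X\<in>L. \<rho> X \<noteq> -\<infinity>"
    and hom: "pos_homogeneous L \<rho>"
    and risk: "\<rho> Z < 0" and mean: "(\<integral>\<omega>. Z \<omega> \<partial>M) > 0"
  shows "strong_rho_arbitrage M \<rho> 1 0 (\<lambda>_. 1) (\<lambda>_ \<omega>. 1 + Z \<omega>)"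
  unfolding strong_rho_arbitrage_def excess_return_single_asset integral_mult_right_zero
proof
  fix \<pi> :: "nat \<Rightarrow> real"
  obtain q where q: "\<rho> Z = ereal q" "q < 0"
    using risk finite Z by (cases "\<rho> Z") auto
  have "(\<lambda>\<omega>. \<pi> 1 * Z \<omega>) \<in> L"
    using L Z by (rule riesz_space_scale)
  then have "- \<infinity> < \<rho> (\<lambda>\<omega>. \<pi> 1 * Z \<omega>)"
    using finite by (simp add: ereal_infty_less(2))
  then obtain v where v: "ereal v < \<rho> (\<lambda>\<omega>. \<pi> 1 * Z \<omega>)"
    using ereal_dense2 by blast
  define t where "t = max 0 (max (\<pi> 1) (v / q)) + 1"
  have "t > 0" "t > \<pi> 1" "t > v / q"
    by (simp_all add: t_def)
  then have "t * q < v"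
    using neg_divide_less_eq[OF q(2)] by blast
  have "\<rho> (\<lambda>\<omega>. t * Z \<omega>) = ereal (t * q)"
    using pos_homogeneousD[OF hom Z, of t] q \<open>t > 0\<close> by simp
  also have "\<dots> < \<rho> (\<lambda>\<omega>. \<pi> 1 * Z \<omega>)"
    using \<open>t * q < v\<close> by (intro less_trans[OF _ v]) simp
  moreover have "\<pi> 1 * (\<integral>\<omega>. Z \<omega> \<partial>M) < t * (\<integral>\<omega>. Z \<omega> \<partial>M)"
    using mean \<open>t > \<pi> 1\<close> by (rule mult_strict_right_mono[rotated])
  ultimately show "\<exists>\<pi>'. \<pi> 1 * (\<integral>\<omega>. Z \<omega> \<partial>M) < \<pi>' 1 * (\<integral>\<omega>. Z \<omega> \<partial>M) \<and>
      \<rho> (\<lambda>\<omega>. \<pi>' 1 * Z \<omega>) < \<rho> (\<lambda>\<omega>. \<pi> 1 * Z \<omega>)"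
    by (intro exI[of _ "\<lambda>_. t"]) simp
qed

theorem theorem3p23:
  fixes M :: "'a measure" and L :: "('a \<Rightarrow> real) set" and \<rho> :: "('a \<Rightarrow> real) \<Rightarrow> ereal"
  assumes "prob_space M"
    and "riesz_space L"
    and "Linf M \<subseteq> L" and "L \<subseteq> L1 M"
    and "\<forall>X\<in>L. \<rho> X \<noteq> -\<infinity>"
    and "monotone_rm M L \<rho>" and "cash_invariant L \<rho>" and "pos_homogeneous L \<rho>"
    and "\<exists>X\<in>L. \<rho> X < WC M X"
  shows "\<exists>d r S0 S1. market M d r S0 S1 \<and> (\<forall>i\<in>{1..d}. ret S0 S1 i \<in> L) \<and>
           \<not> arbitrage_first_kind M d r S0 S1 \<and> strong_rho_arbitrage M \<rho> d r S0 S1"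
proof -
  \<comment> \<open>The construction never uses that M is a probability measure.\<close>
  have L_integrable: "integrable M X" if "X \<in> L" for X
    using assms(4) that unfolding L1_def by blast
  obtain X where X: "X \<in> L" "\<rho> X < WC M X"
    using assms(9) by blast
  obtain Y where Y: "Y \<in> L" "\<rho> Y < 0" "\<not> (AE \<omega> in M. Y \<omega> \<ge> 0)"
    using assms(2,3,7) X(1) borel_measurable_integrable[OF L_integrable[OF X(1)]] X(2)
    by (rule exists_negative_risk_with_losses)
  have "\<not> (AE \<omega> in M. Y \<omega> \<le> 0)"
    using assms(2,6,8) Y(1,2) by (rule not_AE_nonpos_if_negative_risk)
  then obtain Z where Z: "Z \<in> L" "\<rho> Z < 0" "(\<integral>\<omega>. Z \<omega> \<partial>M) > 0" "\<not> (AE \<omega> in M. Z \<omega> \<ge> 0)"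
    using exists_two_signed_negative_risk_positive_mean[OF assms(2,4,6) Y(1,2)] Y(3) by blast
  have "\<not> (AE \<omega> in M. Z \<omega> \<le> 0)"
    using L_integrable[OF Z(1)] Z(3) by (rule not_AE_nonpos_if_integral_pos)
  then show ?thesis
    using Z L_integrable[OF Z(1)] assms(2,5,8)
    by (intro exI[of _ 1] exI[of _ 0] exI[of _ "\<lambda>_. 1"] exI[of _ "\<lambda>_ \<omega>. 1 + Z \<omega>"] conjI
        market_single_asset no_arbitrage_first_kind_single_asset strong_rho_arbitrage_single_asset)
      (simp_all add: ret_single_asset)
qed

end
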